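(* Let $\mathcal{D}$ be an abstract system of proof notations and $s\in\mathbb{N}$. If $\mathcal{D}$ is $s$-bounded, then for every $d\in\mathbb{E}(\mathcal{D})$ we have $|d|\le\vartheta_d(s)$.
   Context: An abstract system of proof notations is a set $\mathcal{D}$ with functions $|\cdot|,o(\cdot)\colon\mathcal{D}\to\mathbb{N}\setminus\{0\}$ (size and height) and a relation $\to\subseteq\mathcal{D}\times\mathcal{D}$ such that $d\to d'$ implies $o(d')<o(d)$. The cut-elimination closure $\mathbb{E}(\mathcal{D})$ is the abstract system of formal terms inductively generated by: every $d\in\mathcal{D}$ is in $\mathbb{E}(\mathcal{D})$ (with size and height inherited); if $d,e\in\mathbb{E}(\mathcal{D})$ then $\mathsf{I}d,\ \mathsf{R}de,\ \mathsf{E}d\in\mathbb{E}(\mathcal{D})$ ($\mathsf I,\mathsf R,\mathsf E$ new symbols), with $|\mathsf Id|=|d|+1$, $|\mathsf Rde|=|d|+|e|+1$, $|\mathsf Ed|=|d|+1$, $o(\mathsf Id)=o(d)$, $o(\mathsf Rde)=o(d)+o(e)$, $o(\mathsf Ed)=2^{o(d)}-1$. The relation $\to$ on $\mathbb{E}(\mathcal{D})$ is inductively generated by: $d\to d'$ in $\mathcal{D}$ implies $d\to d'$; $d\to d'$ implies $\mathsf Id\to\mathsf Id'$; $e\to e'$ implies $\mathsf Rde\to\mathsf Rde'$; $d\to d'$ implies $\mathsf Ed\to\mathsf Ed'$; $\mathsf Rde\to\mathsf Id$ always; and $d\to d'$ together with $d\to d''$ implies $\mathsf Ed\to\mathsf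 R(\mathsf Ed')(\mathsf Ed'')$. The size function $\vartheta_d\colon\mathbb{N}\to\mathbb{N}$ for $d\in\mathbb{E}(\mathcal{D})$ is defined by recursion: $\vartheta_d(s)=s$ for $d\in\mathcal{D}$; $\vartheta_{\mathsf Id}(s)=\vartheta_d(s)+1$; $\vartheta_{\mathsf Rde}(s)=\max\{|d|+1+\vartheta_e(s),\ \vartheta_d(s)+1\}$; $\vartheta_{\mathsf Ed}(s)=o(d)\cdot(\vartheta_d(s)+2)$. $\mathcal{D}$ is called $s$-bounded if $|d|\le s$ for all $d\in\mathcal{D}$. *)

theory Defs
  imports Main
begin

definition abstract_system ::
  "'a set \<Rightarrow> ('a \<Rightarrow> nat) \<Rightarrow> ('a \<Rightarrow> nat) \<Rightarrow> ('a \<Rightarrow> 'a \<Rightarrow> bool) \<Rightarrow> bool" where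
  "abstract_system D sz ht step \<longleftrightarrow>
     (\<forall>d\<in>D. sz d > 0 \<and> ht d > 0) \<and>
     (\<forall>d d'. step d d' \<longrightarrow> d \<in> D \<and> d' \<in> D \<and> ht d' < ht d)"

definition s_bounded :: "'a set \<Rightarrow> ('a \<Rightarrow> nat) \<Rightarrow> nat \<Rightarrow> bool" where
  "s_bounded D sz s \<longleftrightarrow> (\<forall>d\<in>D. sz d \<le> s)"

datatype 'a eterm = Base 'a | ITm "'a eterm" | RTm "'a eterm" "'a eterm" | ETm "'a eterm"

inductive_set cutclosure :: "'a set \<Rightarrow> 'a eterm set" for D where
  base: "d \<in> D \<Longrightarrow> Base d \<in> cutclosure D"
| I: "d \<in> cutclosure D \<Longrightarrow> ITm d \<in> cutclosure D"
| R: "d \<in> cutclosure D \<Longrightarrow> e \<in> cutclosure D \<Longrightarrow> RTm d e \<in> cutclosure D"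
| E: "d \<in> cutclosure D \<Longrightarrow> ETm d \<in> cutclosure D"

fun esize :: "('a \<Rightarrow> nat) \<Rightarrow> 'a eterm \<Rightarrow> nat" where
  "esize sz (Base d) = sz d"
| "esize sz (ITm d) = esize sz d + 1"
| "esize sz (RTm d e) = esize sz d + esize sz e + 1"
| "esize sz (ETm d) = esize sz d + 1"

fun eheight :: "('a \<Rightarrow> nat) \<Rightarrow> 'a eterm \<Rightarrow> nat" where
  "eheight ht (Base d) = ht d"
| "eheight ht (ITm d) = eheight ht d"
| "eheight ht (RTm d e) = eheight ht d + eheight ht e"
| "eheight ht (ETm d) = 2 ^ eheight ht d - 1"

inductive estep :: "('a \<Rightarrow> 'a \<Rightarrow> bool) \<Rightarrow> 'a eterm \<Rightarrow> 'a eterm \<Rightarrow> bool" for step where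
  base: "step d d' \<Longrightarrow> estep step (Base d) (Base d')"
| I: "estep step d d' \<Longrightarrow> estep step (ITm d) (ITm d')"
| R: "estep step e e' \<Longrightarrow> estep step (RTm d e) (RTm d e')"
| E: "estep step d d' \<Longrightarrow> estep step (ETm d) (ETm d')"
| RI: "estep step (RTm d e) (ITm d)"
| ER: "estep step d d' \<Longrightarrow> estep step d d'' \<Longrightarrow> estep step (ETm d) (RTm (ETm d') (ETm d''))"

fun theta :: "('a \<Rightarrow> nat) \<Rightarrow> ('a \<Rightarrow> nat) \<Rightarrow> 'a eterm \<Rightarrow> nat \<Rightarrow> nat" where
  "theta sz ht (Base d) s = s"
| "theta sz ht (ITm d) s = theta sz ht d s + 1"
| "theta sz ht (RTm d e) s = max (esize sz d + 1 + theta sz ht e s) (theta sz ht d s + 1)"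
| "theta sz ht (ETm d) s = eheight ht d * (theta sz ht d s + 2)"

end

theory Submission
  imports Defs
begin

text \<open>The only non-routine case is an
  \<open>E\<close>-term, where the factor \<open>o(d) \<ge> 1\<close> in \<open>theta (ETm d) s = o(d) * (theta d s + 2)\<close> absorbs
  the extra symbol; this is why heights of closure terms must be known to be positive.\<close>

lemma eheight_pos_cutclosure:
  assumes "\<forall>d\<in>D. ht d > 0" and "d \<in> cutclosure D"
  shows "eheight ht d > 0"
  using assms(2)
proof (induction d rule: cutclosure.induct)
  case (base d)
  then show ?case using assms(1) by simp
next
  case (E d)
  then have "(2::nat) ^ 1 \<le> 2 ^ eheight ht d"
    by (intro power_increasing) auto
  then show ?case by simp
qed simp_all

lemma esize_le_theta_cutclosure:
  assumes pos: "\<forall>d\<in>D. ht d > 0" and bounded: "s_bounded D sz s" and "d \<in> cutclosure D"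
  shows "esize sz d \<le> theta sz ht d s"
  using assms(3)
proof (induction d rule: cutclosure.induct)
  case (base d)
  then show ?case using bounded by (simp add: s_bounded_def)
next
  case (E d)
  have "esize sz (ETm d) \<le> 1 * (theta sz ht d s + 2)"
    using E.IH by simp
  also have "\<dots> \<le> eheight ht d * (theta sz ht d s + 2)"
    using eheight_pos_cutclosure[OF pos E.hyps] by (intro mult_right_mono) simp_all
  finally show ?case by simp
qed auto

theorem mainTheorem4:
  fixes D :: "'a set" and sz ht :: "'a \<Rightarrow> nat" and step :: "'a \<Rightarrow> 'a \<Rightarrow> bool" and s :: nat
  assumes "abstract_system D sz ht step"
    and "s_bounded D sz s"
  shows "\<forall>d\<in>cutclosure D. esize sz d \<le> theta sz ht d s"
proof
  fix d assume "d \<in> cutclosure D"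
  moreover have "\<forall>d\<in>D. ht d > 0"
    using assms(1) by (simp add: abstract_system_def)
  ultimately show "esize sz d \<le> theta sz ht d s"
    using esize_le_theta_cutclosure assms(2) by blast
qed

end
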